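(* Let $m\in\mathbb{N}$ and let $d_1,\ldots,d_m$ and $l_1,\ldots,l_m$ be positive integers. For every partition of $\mathbb{N}$ into finitely many pairwise disjoint parts, there exist polynomials $P_1,\ldots,P_m$, with $P_i$ of degree exactly $d_i$ and with nonnegative integer coefficients, and one part $A$ of the partition such that $P_i(j)\in A$ for all $i=1,\ldots,m$ and $j=1,\ldots,l_i$. Moreover, the same conclusion holds with $A$ replaced by any given piecewise syndetic set $A\subseteq\mathbb{N}$.
   Context: $\mathbb{N}=\{1,2,3,\ldots\}$. A set $A\subseteq\mathbb{N}$ is piecewise syndetic if there is $b\in\mathbb{N}$ such that for every $n\in\mathbb{N}$ there is an interval $\{x,x+1,\ldots,x+n\}$ such that every $y$ in this interval satisfies $\{y,y+1,\ldots,y+b\}\cap A\neq\emptyset$; equivalently, $A$ belongs to some ultrafilter in the smallest ideal $K(\beta\mathbb{N})$ of $(\beta\mathbb{N},+)$. *)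

theory Defs
  imports "HOL-Computational_Algebra.Polynomial"
begin

text \<open>Positive integers N = {1,2,...} are represented as the subset {1..} of nat.\<close>

definition piecewise_syndetic :: "nat set \<Rightarrow> bool" where
  "piecewise_syndetic A \<longleftrightarrow> A \<subseteq> {1..} \<and>
     (\<exists>b\<ge>1. \<forall>n\<ge>1. \<exists>x\<ge>1. \<forall>y\<in>{x..x+n}. {y..y+b} \<inter> A \<noteq> {})"

definition finite_partition_of_N :: "nat set set \<Rightarrow> bool" where
  "finite_partition_of_N \<P> \<longleftrightarrow> finite \<P> \<and> \<Union>\<P> = {1..} \<and>
     (\<forall>A\<in>\<P>. \<forall>B\<in>\<P>. A \<noteq> B \<longrightarrow> A \<inter> B = {})"

end

theory Submission
  imports Defs
begin

text \<open>For \<open>P\<^sub>i = e x^d\<^sub>i + c\<close> the values \<open>P\<^sub>i(j)\<close>, \<open>1 \<le> j \<le> l\<^sub>i\<close>, all lie in the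
  arithmetic progression \<open>c, c + e, \<dots>, c + K e\<close> as soon as \<open>K \<ge> l\<^sub>i^d\<^sub>i\<close>. So it suffices that
  some part of the partition, respectively the piecewise syndetic set, contains arbitrarily long
  arithmetic progressions. For partitions this is van der Waerden's theorem, proved here by the
  colour-focusing argument. For a piecewise syndetic set \<open>A\<close> with gap bound \<open>b\<close>, colour each
  point \<open>t\<close> of a long interval by the distance from \<open>t\<close> to the next element of \<open>A\<close>, which is at
  most \<open>b\<close>: a monochromatic progression is then shifted by a constant into \<open>A\<close>.\<close>

text \<open>\<open>L\<close> counts steps: the progression \<open>a, a + e, \<dots>, a + L e\<close> has \<open>L + 1\<close> terms.\<close>

definition monochromatic_AP :: "(nat \<Rightarrow> 'c) \<Rightarrow> nat \<Rightarrow> nat \<Rightarrow> nat \<Rightarrow> bool" where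
  "monochromatic_AP f L a e \<longleftrightarrow> e > 0 \<and> (\<forall>k\<le>L. f (a + k * e) = f a)"

definition vdW_bound :: "nat \<Rightarrow> 'c set \<Rightarrow> nat \<Rightarrow> bool" where
  "vdW_bound L C N \<longleftrightarrow>
     (\<forall>f. f ` {..<N} \<subseteq> C \<longrightarrow> (\<exists>a e. a + L * e < N \<and> monochromatic_AP f L a e))"

definition focused_family ::
    "(nat \<Rightarrow> 'c) \<Rightarrow> nat \<Rightarrow> nat \<Rightarrow> (nat \<Rightarrow> nat) \<Rightarrow> (nat \<Rightarrow> nat) \<Rightarrow> nat \<Rightarrow> bool" where
  "focused_family f L s a e z \<longleftrightarrow>
     (\<forall>i<s. monochromatic_AP f L (a i) (e i) \<and> a i + Suc L * e i = z) \<and>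
     inj_on (\<lambda>i. f (a i)) {..<s}"

definition contains_AP :: "nat \<Rightarrow> nat set \<Rightarrow> bool" where
  "contains_AP K A \<longleftrightarrow> (\<exists>c e. e > 0 \<and> (\<forall>k\<le>K. c + k * e \<in> A))"

lemma add_mult_less_mult:
  fixes j t n M :: nat
  assumes "j < M" "t < n"
  shows "j * n + t < M * n"
proof -
  have "j * n + t < Suc j * n" using assms(2) by simp
  also have "\<dots> \<le> M * n" using assms(1) by (intro mult_le_mono1) simp
  finally show ?thesis .
qed

lemma monochromatic_AP_Suc:
  assumes "monochromatic_AP f L a e" "f (a + Suc L * e) = f a"
  shows "monochromatic_AP f (Suc L) a e"
  using assms unfolding monochromatic_AP_def by (auto simp: le_Suc_eq)

lemma monochromatic_AP_shift:
  "monochromatic_AP (\<lambda>t. f (c + t)) L a e \<longleftrightarrow> monochromatic_AP f L (c + a) e"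
  unfolding monochromatic_AP_def by (simp add: add.assoc)

lemma vdW_bound_0: "vdW_bound 0 C 1"
  unfolding vdW_bound_def monochromatic_AP_def by auto

lemma vdW_bound_inj_image:
  assumes "inj_on h C" "vdW_bound L (h ` C) N"
  shows "vdW_bound L C N"
  unfolding vdW_bound_def
proof (intro allI impI)
  fix f assume f: "f ` {..<N} \<subseteq> C"
  then have "(h \<circ> f) ` {..<N} \<subseteq> h ` C" by auto
  then obtain a e where ae: "a + L * e < N" "monochromatic_AP (h \<circ> f) L a e"
    using assms(2) unfolding vdW_bound_def by blast
  have "f (a + k * e) = f a" if "k \<le> L" for k
  proof -
    have "a + k * e < N" using ae(1) mult_le_mono1[OF that, of e] by linarith
    then have "f (a + k * e) \<in> C" "f a \<in> C" using f by auto
    moreover have "h (f (a + k * e)) = h (f a)"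
      using ae(2) that unfolding monochromatic_AP_def by simp
    ultimately show ?thesis using inj_onD[OF assms(1)] by blast
  qed
  then show "\<exists>a e. a + L * e < N \<and> monochromatic_AP f L a e"
    using ae unfolding monochromatic_AP_def by blast
qed

lemma vdW_bound_finite_colours:
  fixes C :: "'c set"
  assumes "\<And>r. \<exists>N. vdW_bound L {..<r::nat} N" and "finite C"
  shows "\<exists>N. vdW_bound L C N"
proof -
  obtain h :: "'c \<Rightarrow> nat" and r where "h ` C = {..<r}" "inj_on h C"
    using finite_imp_inj_to_nat_seg[OF assms(2)] by (auto simp: lessThan_def)
  then show ?thesis using assms(1)[of r] vdW_bound_inj_image by metis
qed

text \<open>The factor 2 leaves room for the next term \<open>a + (L + 1) e\<close>; for \<open>L = 0\<close> the step
  is reset to 1.\<close>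

lemma vdW_bound_obtain_AP:
  assumes "vdW_bound L C N" "f ` {..<N} \<subseteq> C"
  obtains a e where "a + Suc L * e < 2 * N" "monochromatic_AP f L a e"
proof -
  obtain a e where ae: "a + L * e < N" "monochromatic_AP f L a e"
    using assms unfolding vdW_bound_def by blast
  show thesis
  proof (cases L)
    case 0
    then have "monochromatic_AP f L a 1" unfolding monochromatic_AP_def by simp
    moreover have "a + Suc L * 1 < 2 * N" using ae(1) 0 by simp
    ultimately show thesis using that by blast
  next
    case (Suc L')
    then have "e \<le> L * e" by simp
    then have "a + Suc L * e < 2 * N" using ae(1) by (simp only: mult_Suc)
    then show thesis using ae(2) that by blast
  qed
qed

text \<open>Colour the blocks \<open>[j n, j n + n)\<close> by the word of colours they carry; a monochromatic
  progression of blocks makes \<open>f\<close> periodic across them.\<close>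

lemma block_AP:
  assumes "vdW_bound L {xs. set xs \<subseteq> C \<and> length xs = n} M" "f ` {..<M * n} \<subseteq> C"
  obtains a e where "a + Suc L * e < 2 * M" "e > 0"
    "\<And>k t. k \<le> L \<Longrightarrow> t < n \<Longrightarrow> f ((a + k * e) * n + t) = f (a * n + t)"
proof -
  define g where "g j = map (\<lambda>t. f (j * n + t)) [0..<n]" for j
  have "g j \<in> {xs. set xs \<subseteq> C \<and> length xs = n}" if "j < M" for j
  proof -
    have "f (j * n + t) \<in> C" if "t < n" for t
      using assms(2) add_mult_less_mult[OF \<open>j < M\<close> that] by blast
    then show ?thesis unfolding g_def by auto
  qed
  then have "g ` {..<M} \<subseteq> {xs. set xs \<subseteq> C \<and> length xs = n}" by blast
  then obtain a e where bound: "a + Suc L * e < 2 * M" and AP: "monochromatic_AP g L a e"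
    using vdW_bound_obtain_AP[OF assms(1)] by blast
  have "f ((a + k * e) * n + t) = f (a * n + t)" if "k \<le> L" "t < n" for k t
  proof -
    have "g (a + k * e) ! t = g a ! t"
      using AP \<open>k \<le> L\<close> unfolding monochromatic_AP_def by simp
    then show ?thesis using \<open>t < n\<close> unfolding g_def by simp
  qed
  then show thesis using that bound AP unfolding monochromatic_AP_def by blast
qed

lemma focused_family_extend_or_new_colour:
  assumes "focused_family f L s xs ds z"
  shows "(\<exists>i<s. monochromatic_AP f (Suc L) (xs i) (ds i) \<and> xs i + Suc L * ds i = z)
    \<or> (\<forall>i<s. f z \<noteq> f (xs i))"
  using assms monochromatic_AP_Suc unfolding focused_family_def by metis

text \<open>Each old progression advances by \<open>e n\<close> per term, staying monochromatic by periodicity;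
  the new one repeats the point \<open>z\<close> in the blocks \<open>a, a + e, \<dots>\<close>. All of them arrive at
  \<open>z\<close> in block \<open>a + (L + 1) e\<close>.\<close>

lemma focused_family_lift:
  assumes periodic: "\<And>k t. k \<le> L \<Longrightarrow> t < n \<Longrightarrow> f ((a + k * e) * n + t) = f (a * n + t)"
    and "e > 0" "z < n"
    and fam: "focused_family (\<lambda>t. f (a * n + t)) L s xs ds z"
    and new: "\<forall>i<s. f (a * n + z) \<noteq> f (a * n + xs i)"
  shows "focused_family f L (Suc s) (\<lambda>i. if i < s then a * n + xs i else a * n + z)
    (\<lambda>i. if i < s then ds i + e * n else e * n) ((a + Suc L * e) * n + z)"
proof -
  define xs' where "xs' i = (if i < s then a * n + xs i else a * n + z)" for i
  define ds' where "ds' i = (if i < s then ds i + e * n else e * n)" for i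
  have old: "monochromatic_AP (\<lambda>t. f (a * n + t)) L (xs i) (ds i)"
    "xs i + Suc L * ds i = z" if "i < s" for i
    using fam that unfolding focused_family_def by auto
  have "monochromatic_AP f L (xs' i) (ds' i) \<and> xs' i + Suc L * ds' i = (a + Suc L * e) * n + z"
    if "i < Suc s" for i
  proof (cases "i < s")
    case True
    have "f (xs' i + k * ds' i) = f (xs' i)" if "k \<le> L" for k
    proof -
      have "k * ds i \<le> Suc L * ds i" using that by (intro mult_le_mono1) simp
      then have "xs i + k * ds i < n" using old(2)[OF \<open>i < s\<close>] \<open>z < n\<close> by linarith
      have "xs' i + k * ds' i = (a + k * e) * n + (xs i + k * ds i)"
        unfolding xs'_def ds'_def using True by (simp add: algebra_simps)
      then have "f (xs' i + k * ds' i) = f (a * n + (xs i + k * ds i))"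
        using periodic[OF that \<open>xs i + k * ds i < n\<close>] by simp
      also have "\<dots> = f (xs' i)"
        using old(1)[OF True] that True unfolding xs'_def monochromatic_AP_def by simp
      finally show ?thesis .
    qed
    moreover have "xs' i + Suc L * ds' i = (a + Suc L * e) * n + z"
      using old(2)[OF True] True unfolding xs'_def ds'_def by (simp add: algebra_simps)
    ultimately show ?thesis
      using \<open>e > 0\<close> \<open>z < n\<close> old(1)[OF True] True
      unfolding monochromatic_AP_def ds'_def by simp
  next
    case False
    have "xs' i + k * ds' i = (a + k * e) * n + z" for k
      unfolding xs'_def ds'_def using False by (simp add: algebra_simps)
    then show ?thesis
      using periodic[OF _ \<open>z < n\<close>] \<open>e > 0\<close> \<open>z < n\<close> False
      unfolding monochromatic_AP_def xs'_def ds'_def by (simp add: algebra_simps)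
  qed
  moreover have "inj_on (\<lambda>i. f (xs' i)) {..<Suc s}"
    using fam new unfolding focused_family_def inj_on_def xs'_def
    by (auto simp: less_Suc_eq)
  ultimately show ?thesis unfolding focused_family_def xs'_def ds'_def by blast
qed

lemma colour_focusing:
  assumes "\<And>r. \<exists>N. vdW_bound L {..<r::nat} N"
  shows "\<exists>N. \<forall>f. f ` {..<N} \<subseteq> {..<r::nat} \<longrightarrow>
    (\<exists>a e. a + Suc L * e < N \<and> monochromatic_AP f (Suc L) a e) \<or>
    (\<exists>xs ds z. z < N \<and> focused_family f L s xs ds z)"
proof (induction s)
  case 0
  show ?case unfolding focused_family_def by (intro exI[of _ 1]) auto
next
  case (Suc s)
  then obtain n where n: "\<forall>f. f ` {..<n} \<subseteq> {..<r} \<longrightarrow>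
    (\<exists>a e. a + Suc L * e < n \<and> monochromatic_AP f (Suc L) a e) \<or>
    (\<exists>xs ds z. z < n \<and> focused_family f L s xs ds z)"
    by blast
  obtain M where M: "vdW_bound L {xs. set xs \<subseteq> {..<r} \<and> length xs = n} M"
    using vdW_bound_finite_colours[OF assms finite_lists_length_eq] by blast
  have "(\<exists>a e. a + Suc L * e < 2 * M * n \<and> monochromatic_AP f (Suc L) a e) \<or>
    (\<exists>xs ds z. z < 2 * M * n \<and> focused_family f L (Suc s) xs ds z)"
    if f: "f ` {..<2 * M * n} \<subseteq> {..<r}" for f
  proof -
    have "{..<M * n} \<subseteq> {..<2 * M * n}" by auto
    then have f_blocks: "f ` {..<M * n} \<subseteq> {..<r}" by (rule subset_trans[OF image_mono f])
    obtain a e where ae: "a + Suc L * e < 2 * M" "e > 0"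
      and periodic: "\<And>k t. k \<le> L \<Longrightarrow> t < n \<Longrightarrow> f ((a + k * e) * n + t) = f (a * n + t)"
      using block_AP[OF M f_blocks] by blast
    have in_range: "a * n + t < 2 * M * n" if "t < n" for t
      using add_mult_less_mult[OF _ that, of a "2 * M"] ae(1) by simp
    define fa where "fa t = f (a * n + t)" for t
    have "fa t < r" if "t < n" for t
      using f in_range[OF that] unfolding fa_def by blast
    then have fa_range: "fa ` {..<n} \<subseteq> {..<r}" by blast
    consider x d where "x + Suc L * d < n" "monochromatic_AP fa (Suc L) x d"
      | xs ds z where "z < n" "focused_family fa L s xs ds z"
      using n[rule_format, OF fa_range] by blast
    then show ?thesis
    proof cases
      case (1 x d)
      then have "a * n + x + Suc L * d < 2 * M * n" using in_range by (simp add: add.assoc)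
      moreover have "monochromatic_AP f (Suc L) (a * n + x) d"
        using 1 monochromatic_AP_shift[of f "a * n"] unfolding fa_def by simp
      ultimately show ?thesis by blast
    next
      case (2 xs ds z)
      then consider i where "i < s" "monochromatic_AP fa (Suc L) (xs i) (ds i)"
          "xs i + Suc L * ds i = z"
        | "\<forall>i<s. fa z \<noteq> fa (xs i)"
        using focused_family_extend_or_new_colour by blast
      then show ?thesis
      proof cases
        case (1 i)
        then have "a * n + xs i + Suc L * ds i < 2 * M * n"
          using in_range[OF \<open>z < n\<close>] by (simp add: add.assoc)
        moreover have "monochromatic_AP f (Suc L) (a * n + xs i) (ds i)"
          using 1 monochromatic_AP_shift[of f "a * n"] unfolding fa_def by simp
        ultimately show ?thesis by blast
      next
        case 2
        have "(a + Suc L * e) * n + z < 2 * M * n"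
          using add_mult_less_mult[OF ae(1) \<open>z < n\<close>] by simp
        then show ?thesis
          using focused_family_lift[OF periodic ae(2)] \<open>z < n\<close> \<open>focused_family fa L s xs ds z\<close> 2
          unfolding fa_def by blast
      qed
    qed
  qed
  then show ?case by blast
qed

text \<open>With \<open>r\<close> progressions of distinct colours focused at \<open>z\<close>, every colour below \<open>r\<close>
  occurs among them, so the colour of \<open>z\<close> extends one of them.\<close>

lemma vdW_bound_Suc:
  assumes "\<And>r. \<exists>N. vdW_bound L {..<r::nat} N"
  shows "\<exists>N. vdW_bound (Suc L) {..<r::nat} N"
proof -
  obtain N where N: "\<forall>f. f ` {..<N} \<subseteq> {..<r} \<longrightarrow>
    (\<exists>a e. a + Suc L * e < N \<and> monochromatic_AP f (Suc L) a e) \<or>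
    (\<exists>xs ds z. z < N \<and> focused_family f L r xs ds z)"
    using colour_focusing[OF assms] by blast
  have "\<exists>a e. a + Suc L * e < N \<and> monochromatic_AP f (Suc L) a e"
    if f: "f ` {..<N} \<subseteq> {..<r}" for f
  proof -
    consider (AP) "\<exists>a e. a + Suc L * e < N \<and> monochromatic_AP f (Suc L) a e"
      | (focused) xs ds z where "z < N" "focused_family f L r xs ds z"
      using N[rule_format, OF f] by blast
    then show ?thesis
    proof cases
      case AP
      then show ?thesis .
    next
      case (focused xs ds z)
      have fam: "monochromatic_AP f L (xs i) (ds i)" "xs i + Suc L * ds i = z" if "i < r" for i
        using focused(2) that unfolding focused_family_def by auto
      have inj: "inj_on (\<lambda>i. f (xs i)) {..<r}"
        using focused(2) unfolding focused_family_def by blast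
      have "f (xs i) < r" if "i < r" for i
      proof -
        have "xs i < N" using fam(2)[OF that] \<open>z < N\<close> by linarith
        then show ?thesis using f by blast
      qed
      then have "(\<lambda>i. f (xs i)) ` {..<r} \<subseteq> {..<r}" by blast
      then have colours: "(\<lambda>i. f (xs i)) ` {..<r} = {..<r}"
        by (rule endo_inj_surj[OF finite_lessThan _ inj])
      have "f z \<in> {..<r}" using f \<open>z < N\<close> by blast
      then have "f z \<in> (\<lambda>i. f (xs i)) ` {..<r}" by (simp only: colours)
      then obtain i where "i < r" "f z = f (xs i)" by blast
      then have "monochromatic_AP f (Suc L) (xs i) (ds i)"
        using fam monochromatic_AP_Suc by metis
      moreover have "xs i + Suc L * ds i < N" using fam(2)[OF \<open>i < r\<close>] \<open>z < N\<close> by simp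
      ultimately show ?thesis by blast
    qed
  qed
  then show ?thesis unfolding vdW_bound_def by blast
qed

lemma van_der_Waerden_nat: "\<exists>N. vdW_bound L {..<r::nat} N"
proof (induction L arbitrary: r)
  case 0
  show ?case using vdW_bound_0 by blast
next
  case (Suc L)
  then show ?case using vdW_bound_Suc by blast
qed

theorem van_der_Waerden:
  fixes C :: "'c set"
  assumes "finite C"
  shows "\<exists>N. vdW_bound L C N"
  using van_der_Waerden_nat assms by (rule vdW_bound_finite_colours)

lemma contains_AP_polys:
  assumes "contains_AP K A" and "\<forall>i\<in>I. 1 \<le> d i \<and> l i ^ d i \<le> K"
  shows "\<exists>P :: nat \<Rightarrow> nat poly. (\<forall>i\<in>I. degree (P i) = d i) \<and>
    (\<forall>i\<in>I. \<forall>j\<in>{1..l i}. poly (P i) j \<in> A)"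
proof -
  obtain c e where "e > 0" and AP: "\<forall>k\<le>K. c + k * e \<in> A"
    using assms(1) unfolding contains_AP_def by blast
  define P where "P i = monom e (d i) + [:c:]" for i
  have "degree (P i) = d i" if "i \<in> I" for i
  proof -
    have "d i \<ge> 1" using assms(2) that by blast
    then have "degree [:c:] < degree (monom e (d i))"
      using \<open>e > 0\<close> by (simp add: degree_monom_eq)
    then show ?thesis using \<open>e > 0\<close> unfolding P_def by (simp add: degree_add_eq_left degree_monom_eq)
  qed
  moreover have "poly (P i) j \<in> A" if "i \<in> I" "j \<in> {1..l i}" for i j
  proof -
    have "j ^ d i \<le> l i ^ d i" using that(2) by (intro power_mono) auto
    also have "\<dots> \<le> K" using assms(2) that(1) by blast
    finally have "c + j ^ d i * e \<in> A" using AP by blast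
    then show ?thesis unfolding P_def by (simp add: poly_monom ac_simps)
  qed
  ultimately show ?thesis by blast
qed

lemma finite_partition_of_N_part_contains_AP:
  assumes "finite_partition_of_N \<P>"
  shows "\<exists>A\<in>\<P>. contains_AP K A"
proof -
  have "finite \<P>" and parts: "\<exists>A\<in>\<P>. Suc x \<in> A" for x
    using assms unfolding finite_partition_of_N_def by auto
  define part where "part x = (SOME A. A \<in> \<P> \<and> Suc x \<in> A)" for x
  have part: "part x \<in> \<P>" "Suc x \<in> part x" for x
    using someI_ex[OF parts[of x, unfolded Bex_def]] unfolding part_def by auto
  obtain N where "vdW_bound K \<P> N" using van_der_Waerden[OF \<open>finite \<P>\<close>] by blast
  moreover have "part ` {..<N} \<subseteq> \<P>" using part by auto
  ultimately obtain a e where "monochromatic_AP part K a e"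
    unfolding vdW_bound_def by blast
  then have "\<forall>k\<le>K. Suc a + k * e \<in> part a"
    using part(2) unfolding monochromatic_AP_def by (metis add_Suc)
  then show ?thesis using \<open>monochromatic_AP part K a e\<close> part(1)
    unfolding contains_AP_def monochromatic_AP_def by blast
qed

lemma piecewise_syndetic_contains_AP:
  assumes "piecewise_syndetic A"
  shows "contains_AP K A"
proof -
  obtain b where b: "\<forall>n\<ge>1. \<exists>x\<ge>1. \<forall>y\<in>{x..x + n}. {y..y + b} \<inter> A \<noteq> {}"
    using assms unfolding piecewise_syndetic_def by blast
  obtain N where N: "vdW_bound K {..b} N" using van_der_Waerden by blast
  obtain x where x: "\<forall>y\<in>{x..x + max 1 N}. {y..y + b} \<inter> A \<noteq> {}"
    using b[rule_format, of "max 1 N"] by auto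
  define gap where "gap t = (LEAST u. x + t + u \<in> A)" for t
  have gap: "x + t + gap t \<in> A \<and> gap t \<le> b" if "t < N" for t
  proof -
    have "x + t \<in> {x..x + max 1 N}" using \<open>t < N\<close> by simp
    then obtain y where y: "y \<in> A" "x + t \<le> y" "y \<le> x + t + b" using x by fastforce
    define u where "u = y - (x + t)"
    have "x + t + u \<in> A" "u \<le> b" using y unfolding u_def by auto
    then have "x + t + gap t \<in> A" "gap t \<le> u" unfolding gap_def by (auto intro: LeastI Least_le)
    with \<open>u \<le> b\<close> show ?thesis by simp
  qed
  then have "gap ` {..<N} \<subseteq> {..b}" by auto
  then obtain a e where ae: "a + K * e < N" "monochromatic_AP gap K a e"
    using N unfolding vdW_bound_def by blast
  have "(x + a + gap a) + k * e \<in> A" if "k \<le> K" for k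
  proof -
    have "a + k * e < N" using ae(1) mult_le_mono1[OF that, of e] by linarith
    then have "x + (a + k * e) + gap (a + k * e) \<in> A" using gap by blast
    moreover have "gap (a + k * e) = gap a"
      using ae(2) that unfolding monochromatic_AP_def by blast
    moreover have "x + (a + k * e) + gap a = (x + a + gap a) + k * e" by simp
    ultimately show ?thesis by simp
  qed
  then show ?thesis using ae(2) unfolding contains_AP_def monochromatic_AP_def by blast
qed

theorem mainTheorem5:
  fixes m :: nat and d l :: "nat \<Rightarrow> nat"
  assumes "m \<ge> 1"
    and "\<forall>i\<in>{1..m}. d i \<ge> 1 \<and> l i \<ge> 1"
  shows "(\<forall>\<P>. finite_partition_of_N \<P> \<longrightarrow>
            (\<exists>P :: nat \<Rightarrow> nat poly. \<exists>A\<in>\<P>.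
               (\<forall>i\<in>{1..m}. degree (P i) = d i) \<and>
               (\<forall>i\<in>{1..m}. \<forall>j\<in>{1..l i}. poly (P i) j \<in> A)))
       \<and> (\<forall>A. piecewise_syndetic A \<longrightarrow>
            (\<exists>P :: nat \<Rightarrow> nat poly.
               (\<forall>i\<in>{1..m}. degree (P i) = d i) \<and>
               (\<forall>i\<in>{1..m}. \<forall>j\<in>{1..l i}. poly (P i) j \<in> A)))"
proof -
  define K where "K = (\<Sum>i\<in>{1..m}. l i ^ d i)"
  have "\<forall>i\<in>{1..m}. 1 \<le> d i \<and> l i ^ d i \<le> K"
    using assms(2) unfolding K_def by (auto intro: member_le_sum)
  then have polys: "\<exists>P :: nat \<Rightarrow> nat poly. (\<forall>i\<in>{1..m}. degree (P i) = d i) \<and>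
      (\<forall>i\<in>{1..m}. \<forall>j\<in>{1..l i}. poly (P i) j \<in> A)" if "contains_AP K A" for A
    using contains_AP_polys[OF that] by blast
  show ?thesis
    using polys finite_partition_of_N_part_contains_AP piecewise_syndetic_contains_AP by meson
qed

end
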